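(* Let $U,V\in GL_n(\mathbb{C})$ and let $D$ be a diagonal $n\times n$ complex matrix. If every principal minor of $VU$ equals $1$, then the Newton polygons of $D$ and $UDV$ coincide.
   Context: For an $n\times n$ complex matrix $M$ with eigenvalues $\mu_1,\dots,\mu_n$ ordered so that $|\mu_1|\ge\dots\ge|\mu_n|$, the Newton polygon of $M$ is the polygonal line joining the points $(-n+k,\, s_1+\dots+s_k)$ for $k=0,\dots,n$, where $s_j=-\log|\mu_j|$ (with values in $\mathbb{R}\cup\{+\infty\}$). *)

theory Defs
  imports Complex_Main "HOL-Library.Extended_Real" "Jordan_Normal_Form.Char_Poly"
    "Jordan_Normal_Form.DL_Submatrix"
begin

definition eigenvalues_mset :: "complex mat \<Rightarrow> complex multiset" where
  "eigenvalues_mset A = proots (char_poly A)"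

definition slope_val :: "complex \<Rightarrow> ereal" where
  "slope_val \<mu> = (if \<mu> = 0 then PInfty else ereal (- ln (cmod \<mu>)))"

text \<open>Newton polygon: the list of vertices (-n+k, s_1+...+s_k), k = 0..n, where the
  eigenvalues are ordered by decreasing modulus (i.e. the s_j increasing).\<close>
definition newton_polygon :: "complex mat \<Rightarrow> (int \<times> ereal) list" where
  "newton_polygon A =
     (let n = dim_row A;
          ss = sorted_list_of_multiset (image_mset slope_val (eigenvalues_mset A))
      in map (\<lambda>k. (- int n + int k, sum_list (take k ss))) [0..<n+1])"

definition principal_minor :: "'a :: comm_ring_1 mat \<Rightarrow> nat set \<Rightarrow> 'a" where
  "principal_minor A I = det (submatrix A I I)"

end

theory Submission
  imports Defs
begin

(* Since U is invertible, U D V = U (D V) is similar to (D V) U = D (V U), so both have the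
   same characteristic polynomial, and the Newton polygon depends only on that polynomial.
   For diagonal T = diag t, D = diag d and a matrix W, expanding det (T - D W) row by row gives
   the sum over all index sets I of prod_{j not in I} t_j * prod_{i in I} (- d_i) * det W_II.
   If every principal minor of W is 1, this is prod_j (t_j - d_j); with t_j = x it says that
   D W and D have the same characteristic polynomial. *)

lemma strict_mono_insert_index: "strict_mono (insert_index i)"
  unfolding strict_mono_def insert_index_def by auto

lemma insert_index_less: "a < n \<Longrightarrow> insert_index i a < Suc n"
  by (simp add: insert_index_def)

lemma pick_strict_mono_image:
  assumes f: "strict_mono (f :: nat \<Rightarrow> nat)" and k: "k < card I"
  shows "pick (f ` I) k = f (pick I k)"
  using k
proof (induction k)
  case 0
  have "(LEAST a. a \<in> f ` I) = f (LEAST a. a \<in> I)"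
  proof (rule Least_equality)
    show "f (LEAST a. a \<in> I) \<in> f ` I"
      using 0 by (metis LeastI card.empty ex_in_conv imageI less_irrefl)
  qed (use f in \<open>auto simp: Least_le strict_mono_less_eq\<close>)
  then show ?case by simp
next
  case (Suc k)
  let ?next = "LEAST b. b \<in> I \<and> b > pick I k"
  have "?next \<in> I \<and> ?next > pick I k"
    using pick_in_set_le[OF Suc.prems] pick_mono_le[OF Suc.prems, of k] by (auto intro: LeastI)
  then have "(LEAST a. a \<in> f ` I \<and> a > f (pick I k)) = f ?next"
    by (intro Least_equality) (use f in \<open>auto simp: Least_le strict_mono_less_eq strict_mono_less\<close>)
  then show ?case using Suc by simp
qed

lemma pick_atLeastLessThan: "k < n \<Longrightarrow> pick {0..<n} k = k"
  using pick_reduce_set[of k n UNIV] by (simp add: pick_UNIV atLeast0LessThan lessThan_def)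

lemma card_Collect_less_mem: "I \<subseteq> {0..<n} \<Longrightarrow> card {i. i < n \<and> i \<in> I} = card I"
  by (metis (no_types, lifting) Collect_cong Collect_mem_eq atLeastLessThan_iff subset_eq)

lemma submatrix_all:
  assumes "A \<in> carrier_mat m n"
  shows "submatrix A {0..<m} {0..<n} = A"
  using assms by (intro eq_matI) (auto simp: dim_submatrix submatrix_index pick_atLeastLessThan)

lemma index_mat_delete:
  assumes "A \<in> carrier_mat m n" and "a < m - 1" and "b < n - 1"
  shows "mat_delete A i j $$ (a, b) = A $$ (insert_index i a, insert_index j b)"
  using assms by (simp add: mat_delete_def insert_index_def)

lemma submatrix_mat_delete:
  assumes A: "A \<in> carrier_mat (Suc m) (Suc n)" and I: "I \<subseteq> {0..<m}" and J: "J \<subseteq> {0..<n}"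
  shows "submatrix (mat_delete A i j) I J
    = submatrix A (insert_index i ` I) (insert_index j ` J)"
proof -
  have "insert_index i ` I \<subseteq> {0..<Suc m}" "insert_index j ` J \<subseteq> {0..<Suc n}"
    using I J by (auto simp: insert_index_less)
  then have card: "card {a. a < Suc m \<and> a \<in> insert_index i ` I} = card I"
    "card {b. b < Suc n \<and> b \<in> insert_index j ` J} = card J"
    by (simp_all add: card_Collect_less_mem card_image insert_index_inj_on)
  show ?thesis
  proof (rule eq_matI)
    fix a b
    assume "a < dim_row (submatrix A (insert_index i ` I) (insert_index j ` J))"
      "b < dim_col (submatrix A (insert_index i ` I) (insert_index j ` J))"
    then have ab: "a < card I" "b < card J" using A card by (auto simp: dim_submatrix)
    then have "pick I a < m" "pick J b < n"
      using pick_in_set_le[OF ab(1)] pick_in_set_le[OF ab(2)] I J by auto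
    then show "submatrix (mat_delete A i j) I J $$ (a, b)
      = submatrix A (insert_index i ` I) (insert_index j ` J) $$ (a, b)"
      using A I J ab card
      by (simp add: submatrix_index card_Collect_less_mem mat_delete_def insert_index_def[symmetric]
          pick_strict_mono_image strict_mono_insert_index)
  qed (use A I J card in \<open>auto simp: dim_submatrix card_Collect_less_mem\<close>)
qed

lemma principal_minor_mat_delete:
  assumes "A \<in> carrier_mat (Suc n) (Suc n)" and "I \<subseteq> {0..<n}"
  shows "principal_minor (mat_delete A i i) I = principal_minor A (insert_index i ` I)"
  unfolding principal_minor_def using submatrix_mat_delete[OF assms assms(2)] by simp

lemma principal_minor_all: "A \<in> carrier_mat n n \<Longrightarrow> principal_minor A {0..<n} = det A"
  unfolding principal_minor_def by (simp add: submatrix_all)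

lemma principal_minor_one_mat:
  assumes "I \<subseteq> {0..<n}"
  shows "principal_minor (1\<^sub>m n :: 'a :: comm_ring_1 mat) I = 1"
proof -
  have "pick I a = pick I b \<longleftrightarrow> a = b" if "a < card I" "b < card I" for a b
    using that pick_mono_le by (metis nat_neq_iff)
  then have "submatrix (1\<^sub>m n :: 'a mat) I I = 1\<^sub>m (card I)"
    using assms pick_in_set_le
    by (intro eq_matI) (auto simp: dim_submatrix submatrix_index card_Collect_less_mem subset_iff)
  then show ?thesis
    unfolding principal_minor_def by simp
qed

lemma prod_lessThan_Suc_insert_index:
  assumes "i < Suc n"
  shows "(\<Prod>j<Suc n. f j) = f i * (\<Prod>j<n. f (insert_index i j))"
proof -
  have "(\<Prod>j<n. f (insert_index i j)) = (\<Prod>j\<in>{0..<Suc n} - {i}. f j)"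
    using prod.reindex[OF insert_index_inj_on, of f i "{0..<n}"] insert_index_image[OF assms]
    by (simp add: atLeast0LessThan)
  then show ?thesis
    using assms by (metis atLeast0LessThan finite_lessThan lessThan_iff prod.remove)
qed

lemma mat_diag_minus_mat_diag_mult_carrier:
  "W \<in> carrier_mat n n \<Longrightarrow> mat_diag n t - mat_diag n d * W \<in> carrier_mat n n"
  using mult_carrier_mat[OF mat_diag_dim] by (rule minus_carrier_mat)

lemma index_mat_diag_minus_mat_diag_mult:
  assumes "W \<in> carrier_mat n n" and "a < n" and "b < n"
  shows "(mat_diag n t - mat_diag n d * W) $$ (a, b)
    = (if a = b then t a else 0) - d a * W $$ (a, b)"
  using assms by (simp add: mat_diag_mult_left) (simp add: mat_diag_def)

lemma mat_delete_mat_diag_minus_mat_diag_mult: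
  assumes W: "W \<in> carrier_mat (Suc n) (Suc n)"
  shows "mat_delete (mat_diag (Suc n) t - mat_diag (Suc n) d * W) i i
    = mat_diag n (t \<circ> insert_index i) - mat_diag n (d \<circ> insert_index i) * mat_delete W i i"
    (is "mat_delete ?M i i = ?N")
proof (rule eq_matI)
  have M: "?M \<in> carrier_mat (Suc n) (Suc n)"
    using W by (rule mat_diag_minus_mat_diag_mult_carrier)
  have W': "mat_delete W i i \<in> carrier_mat n n"
    using mat_delete_carrier[OF W] by simp
  then have N: "?N \<in> carrier_mat n n"
    by (rule mat_diag_minus_mat_diag_mult_carrier)
  fix a b assume "a < dim_row ?N" "b < dim_col ?N"
  then have ab: "a < n" "b < n" using N by auto
  then have "insert_index i a < Suc n" "insert_index i b < Suc n"
    by (simp_all add: insert_index_less)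
  moreover have "insert_index i a = insert_index i b \<longleftrightarrow> a = b"
    using strict_mono_insert_index strict_mono_eq by metis
  moreover have "mat_delete ?M i i $$ (a, b) = ?M $$ (insert_index i a, insert_index i b)"
    "mat_delete W i i $$ (a, b) = W $$ (insert_index i a, insert_index i b)"
    using M W ab by (simp_all add: index_mat_delete)
  ultimately show "mat_delete ?M i i $$ (a, b) = ?N $$ (a, b)"
    using W W' ab by (simp add: index_mat_diag_minus_mat_diag_mult)
qed (use W in \<open>auto simp: mat_diag_def\<close>)

lemma det_mat_diag_minus_mat_diag_mult_expand_row:
  assumes W: "W \<in> carrier_mat n n" and i: "i < n"
  shows "det (mat_diag n t - mat_diag n d * W)
    = t i * det (mat_delete (mat_diag n t - mat_diag n d * W) i i)
      - d i * det (mat_diag n (t(i := 0)) - mat_diag n (d(i := -1)) * W)"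
proof -
  let ?M = "mat_diag n t - mat_diag n d * W"
  let ?R = "mat_diag n (t(i := 0)) - mat_diag n (d(i := -1)) * W"
  have M: "?M \<in> carrier_mat n n" and R: "?R \<in> carrier_mat n n"
    using W by (rule mat_diag_minus_mat_diag_mult_carrier)+
  have delete: "mat_delete ?M i j = mat_delete ?R i j" if "j < n" for j
  proof (rule eq_matI)
    fix a b assume "a < dim_row (mat_delete ?R i j)" "b < dim_col (mat_delete ?R i j)"
    then have "a < n - 1" "b < n - 1" using R by auto
    moreover from this have "insert_index i a < n" "insert_index j b < n"
      using insert_index_less[of a "n - 1"] insert_index_less[of b "n - 1"] by auto
    ultimately show "mat_delete ?M i j $$ (a, b) = mat_delete ?R i j $$ (a, b)"
      using M R W by (simp add: index_mat_delete index_mat_diag_minus_mat_diag_mult)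
  qed (simp_all add: mat_diag_def)
  have cofactor: "cofactor ?M i j = cofactor ?R i j" if "j < n" for j
    unfolding cofactor_def using delete[OF that] by simp
  have row: "?M $$ (i, j) = (if i = j then t i else 0) - d i * ?R $$ (i, j)" if "j < n" for j
    using W i that by (simp add: index_mat_diag_minus_mat_diag_mult)
  have "det ?M = (\<Sum>j<n. ?M $$ (i, j) * cofactor ?M i j)"
    by (rule laplace_expansion_row[OF M i])
  also have "\<dots> = (\<Sum>j<n. (if i = j then t i * cofactor ?M i j else 0)
      - d i * (?R $$ (i, j) * cofactor ?R i j))"
    by (intro sum.cong) (auto simp: row cofactor algebra_simps)
  also have "\<dots> = (\<Sum>j<n. if i = j then t i * cofactor ?M i j else 0)
      - d i * (\<Sum>j<n. ?R $$ (i, j) * cofactor ?R i j)"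
    by (simp add: sum_subtractf sum_distrib_left)
  also have "\<dots> = t i * det (mat_delete ?M i i) - d i * det ?R"
    using i by (simp add: laplace_expansion_row[OF R i] cofactor_def power_mult flip: mult_2)
  finally show ?thesis .
qed

lemma det_mat_diag_minus_mat_diag_mult_Suc:
  fixes W :: "'a :: comm_ring_1 mat"
  assumes W: "W \<in> carrier_mat (Suc n) (Suc n)" and "det W = 1"
    and delete: "\<And>i t d. i < Suc n \<Longrightarrow>
      det (mat_delete (mat_diag (Suc n) t - mat_diag (Suc n) d * W) i i)
      = (\<Prod>j<n. t (insert_index i j) - d (insert_index i j))"
  shows "det (mat_diag (Suc n) t - mat_diag (Suc n) d * W) = (\<Prod>j<Suc n. t j - d j)"
proof -
  \<comment> \<open>Setting \<open>t j = 0\<close> and \<open>d j = -1\<close> turns row \<open>j\<close> into row \<open>j\<close> of \<open>W\<close>; induct on the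
    number of rows that are not yet of this form.\<close>
  have "det (mat_diag (Suc n) t - mat_diag (Suc n) d * W) = (\<Prod>j<Suc n. t j - d j)"
    if "card {j. j < Suc n \<and> (t j, d j) \<noteq> (0, -1)} = k" for k t d
    using that
  proof (induction k arbitrary: t d)
    case 0
    then have td: "t j = 0 \<and> d j = -1" if "j < Suc n" for j
      using that by auto
    then have "mat_diag (Suc n) t - mat_diag (Suc n) d * W = W"
      using W by (intro eq_matI)
        (auto simp: index_mat_diag_minus_mat_diag_mult, simp_all add: mat_diag_def)
    then show ?case
      using td \<open>det W = 1\<close> by simp
  next
    case (Suc k)
    then obtain i where i: "i < Suc n" "(t i, d i) \<noteq> (0, -1)"
      by (metis (mono_tags, lifting) Collect_empty_eq card.empty nat.distinct(1))
    let ?t = "t(i := 0)" and ?d = "d(i := -1)"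
    have "{j. j < Suc n \<and> (?t j, ?d j) \<noteq> (0, -1)}
      = {j. j < Suc n \<and> (t j, d j) \<noteq> (0, -1)} - {i}"
      by auto
    then have "det (mat_diag (Suc n) ?t - mat_diag (Suc n) ?d * W) = (\<Prod>j<Suc n. ?t j - ?d j)"
      using Suc i by (intro Suc.IH) simp
    also have "\<dots> = (\<Prod>j<n. t (insert_index i j) - d (insert_index i j))"
      by (subst prod_lessThan_Suc_insert_index[OF i(1)]) simp
    finally show ?case
      using det_mat_diag_minus_mat_diag_mult_expand_row[OF W i(1), of t d]
        prod_lessThan_Suc_insert_index[OF i(1), of "\<lambda>j. t j - d j"]
      by (simp add: delete[OF i(1)] left_diff_distrib)
  qed
  then show ?thesis by blast
qed

lemma det_mat_diag_minus_mat_diag_mult: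
  fixes W :: "'a :: comm_ring_1 mat"
  assumes "W \<in> carrier_mat n n"
    and "\<And>I. I \<subseteq> {0..<n} \<Longrightarrow> I \<noteq> {} \<Longrightarrow> principal_minor W I = 1"
  shows "det (mat_diag n t - mat_diag n d * W) = (\<Prod>j<n. t j - d j)"
  using assms
proof (induction n arbitrary: W t d)
  case 0
  then show ?case
    by (simp add: det_def mat_diag_def)
next
  case (Suc n)
  note W = Suc.prems(1) and minors = Suc.prems(2)
  have minors_delete: "principal_minor (mat_delete W i i) I = 1"
    if "I \<subseteq> {0..<n}" "I \<noteq> {}" for i I
  proof -
    have "insert_index i ` I \<subseteq> {0..<Suc n}"
      using that by (auto simp: insert_index_less)
    then show ?thesis
      using that by (simp add: principal_minor_mat_delete[OF W] minors)
  qed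
  have "det W = 1"
    using minors[of "{0..<Suc n}"] by (simp add: principal_minor_all[OF W])
  moreover have "mat_delete W i i \<in> carrier_mat n n" for i
    using mat_delete_carrier[OF W] by simp
  ultimately show ?case
    using W minors_delete Suc.IH
    by (intro det_mat_diag_minus_mat_diag_mult_Suc)
      (simp_all add: mat_delete_mat_diag_minus_mat_diag_mult)
qed

lemma diagonal_mat_eq_mat_diag:
  assumes "D \<in> carrier_mat n n" and "diagonal_mat D"
  shows "D = mat_diag n (\<lambda>j. D $$ (j, j))"
  using assms unfolding diagonal_mat_def mat_diag_def by (intro eq_matI) auto

lemma poly_char_poly_diagonal_mult:
  fixes D W :: "'a :: field mat"
  assumes D: "D \<in> carrier_mat n n" and "diagonal_mat D" and W: "W \<in> carrier_mat n n"
    and "\<And>I. I \<subseteq> {0..<n} \<Longrightarrow> I \<noteq> {} \<Longrightarrow> principal_minor W I = 1"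
  shows "poly (char_poly (D * W)) x = (\<Prod>j<n. x - D $$ (j, j))"
proof -
  let ?d = "\<lambda>j. D $$ (j, j)"
  have DW: "D * W = mat_diag n ?d * W"
    using diagonal_mat_eq_mat_diag[OF D \<open>diagonal_mat D\<close>] by simp
  have "- char_matrix (D * W) x = mat_diag n (\<lambda>_. x) - mat_diag n ?d * W"
    unfolding DW char_matrix_def using W
    by (intro eq_matI) (auto simp: index_mat_diag_minus_mat_diag_mult, simp_all add: mat_diag_def)
  then show ?thesis
    using D W assms(4)
    by (simp add: char_poly_matrix[of _ n] det_mat_diag_minus_mat_diag_mult)
qed

lemma char_poly_diagonal_mult:
  fixes D W :: "'a :: field_char_0 mat"
  assumes D: "D \<in> carrier_mat n n" and "diagonal_mat D" and W: "W \<in> carrier_mat n n"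
    and "\<And>I. I \<subseteq> {0..<n} \<Longrightarrow> I \<noteq> {} \<Longrightarrow> principal_minor W I = 1"
  shows "char_poly (D * W) = char_poly D"
proof -
  have "poly (char_poly (D * 1\<^sub>m n)) x = (\<Prod>j<n. x - D $$ (j, j))" for x
    by (rule poly_char_poly_diagonal_mult[OF D \<open>diagonal_mat D\<close> one_carrier_mat])
      (rule principal_minor_one_mat)
  then have "poly (char_poly (D * W)) x = poly (char_poly (D * 1\<^sub>m n)) x" for x
    using poly_char_poly_diagonal_mult[OF assms] by simp
  then have "poly (char_poly (D * W)) = poly (char_poly D)"
    using D by auto
  then show ?thesis
    by (simp add: poly_eq_poly_eq_iff)
qed

lemma similar_mat_mult_swap:
  assumes U: "U \<in> carrier_mat n n" and A: "A \<in> carrier_mat n n" and "invertible_mat U"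
  shows "similar_mat (U * A) (A * U)"
proof -
  obtain B where "inverts_mat U B" and "inverts_mat B U"
    using \<open>invertible_mat U\<close> unfolding invertible_mat_def by blast
  then have UB: "U * B = 1\<^sub>m n" and BU: "B * U = 1\<^sub>m (dim_row B)"
    using U unfolding inverts_mat_def by auto
  have "dim_row B = n" "dim_col B = n"
    using arg_cong[OF BU, of dim_col] arg_cong[OF UB, of dim_col] U by auto
  then have B: "B \<in> carrier_mat n n" by blast
  have "U * (A * U) * B = U * A * (U * B)"
    using U A B by (simp add: assoc_mult_mat[of _ n n _ n _ n])
  also have "\<dots> = U * A"
    using U A by (simp add: UB)
  finally show ?thesis
    using U A B UB BU by (intro similar_matI[of _ _ U B n]) auto
qed

lemma newton_polygon_char_poly_cong:
  "dim_row A = dim_row B \<Longrightarrow> char_poly A = char_poly B \<Longrightarrow> newton_polygon A = newton_polygon B"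
  unfolding newton_polygon_def eigenvalues_mset_def by simp

theorem proposition4p5:
  fixes U V D :: "complex mat" and n :: nat
  assumes "U \<in> carrier_mat n n" "V \<in> carrier_mat n n" "D \<in> carrier_mat n n"
    and "invertible_mat U" "invertible_mat V"
    and "diagonal_mat D"
    and "\<And>I. I \<subseteq> {0..<n} \<Longrightarrow> I \<noteq> {} \<Longrightarrow> principal_minor (V * U) I = 1"
  shows "newton_polygon (U * D * V) = newton_polygon D"
proof -
  note U = assms(1) and V = assms(2) and D = assms(3)
  have "similar_mat (U * (D * V)) (D * V * U)"
    using U D V assms(4) by (intro similar_mat_mult_swap) auto
  then have "char_poly (U * D * V) = char_poly (D * (V * U))"
    by (simp add: char_poly_similar assoc_mult_mat[OF U D V] assoc_mult_mat[OF D V U])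
  also have "\<dots> = char_poly D"
    using U V D assms(6,7) by (intro char_poly_diagonal_mult) auto
  finally show ?thesis
    using U D by (intro newton_polygon_char_poly_cong) auto
qed

end
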